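(* Let $-1<a<0$ and $c>b>0$. Then the function $$\varphi(x)=\frac{{}_2F_1(a,b,c,x)}{{}_2F_1(a,b+1,c+1,x)}$$ is logarithmically convex on $(-\infty,1)$.
   Context: ${}_2F_1(a,b,c,x)$ denotes the Gauss hypergeometric function; for $c>b>0$ it is given on $(-\infty,1)$ by ${}_2F_1(a,b,c,x)=\frac{\Gamma(c)}{\Gamma(b)\Gamma(c-b)}\int_0^1\frac{s^{b-1}(1-s)^{c-b-1}}{(1-sx)^a}ds$. *)

theory Defs
  imports "HOL-Analysis.Analysis"
begin

text \<open>Gauss hypergeometric function via the Euler integral representation,
  valid for c > b > 0 and x < 1 (the setting of the paper).\<close>
definition hyp2F1 :: "real \<Rightarrow> real \<Rightarrow> real \<Rightarrow> real \<Rightarrow> real" where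
  "hyp2F1 a b c x =
     Gamma c / (Gamma b * Gamma (c - b)) *
     integral {0..1} (\<lambda>s. s powr (b - 1) * (1 - s) powr (c - b - 1) / (1 - s * x) powr a)"

definition log_convex_on :: "real set \<Rightarrow> (real \<Rightarrow> real) \<Rightarrow> bool" where
  "log_convex_on S f \<longleftrightarrow> (\<forall>x\<in>S. f x > 0) \<and> convex_on S (\<lambda>x. ln (f x))"

end

theory Submission
  imports Defs
begin

text \<open>
  Let \<open>\<alpha> = -a\<close>, so \<open>0 < \<alpha> < 1\<close>, and let \<open>J k p x\<close> (\<open>euler_integral b c k p x\<close>) be the integral over \<open>[0,1]\<close> of
  \<open>s^(b-1) (1-s)^(c-b-1) s^k (1-sx)^p\<close>. The quotient is \<open>(b/c) J 0 \<alpha> / J 1 \<alpha>\<close>.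
  Differentiating under the integral sign and writing \<open>u k = J (k+1) (\<alpha>-1) / J k \<alpha>\<close>, the
  derivative of \<open>ln (J 0 \<alpha> / J 1 \<alpha>)\<close> is \<open>\<alpha> (u 1 - u 0)\<close>, whose own derivative is
  \<open>\<alpha> ((1-\<alpha>) (J 3 (\<alpha>-2) / J 1 \<alpha> - J 2 (\<alpha>-2) / J 0 \<alpha>) + \<alpha> ((u 1)^2 - (u 0)^2))\<close>.
  Both brackets are nonnegative by Chebyshev's integral inequality for the increasing
  functions \<open>s\<close> and \<open>(s/(1-sx))^j\<close> against the weight \<open>s^(b-1) (1-s)^(c-b-1) (1-sx)^\<alpha>\<close>.
\<close>

lemma convex_on_cong:
  assumes "convex_on S f" "\<And>x. x \<in> S \<Longrightarrow> f x = g x"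
  shows "convex_on S g"
  using assms by (auto simp: convex_on_def convex_def)

lemma powr_le_powr_add_powr:
  fixes m t M r :: real
  assumes "0 < m" "m \<le> t" "t \<le> M"
  shows "t powr r \<le> m powr r + M powr r"
proof (cases "0 \<le> r")
  case True
  then have "t powr r \<le> M powr r" using assms by (intro powr_mono2) auto
  then show ?thesis by (simp add: add_increasing)
next
  case False
  then have "t powr r \<le> m powr r" using assms by (intro powr_mono2') auto
  then show ?thesis by (simp add: add_increasing2)
qed

lemma taylor_quadratic_remainder_le:
  fixes f f' f'' :: "real \<Rightarrow> real"
  assumes f': "\<And>t. t \<in> {l..u} \<Longrightarrow> (f has_real_derivative f' t) (at t)"
    and f'': "\<And>t. t \<in> {l..u} \<Longrightarrow> (f' has_real_derivative f'' t) (at t)"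
    and bound: "\<And>t. t \<in> {l..u} \<Longrightarrow> \<bar>f'' t\<bar> \<le> B"
    and "x \<in> {l..u}" "y \<in> {l..u}"
  shows "\<bar>f y - f x - (y - x) * f' x\<bar> \<le> B / 2 * (y - x)\<^sup>2"
proof (cases "y = x")
  case False
  define diff where "diff n = (if n = 0 then f else if n = 1 then f' else f'')" for n :: nat
  have "\<forall>n t. n < 2 \<and> l \<le> t \<and> t \<le> u \<longrightarrow> (diff n has_real_derivative diff (Suc n) t) (at t)"
    using f' f'' by (auto simp: diff_def less_2_cases_iff)
  then obtain t where t: "if y < x then y < t \<and> t < x else x < t \<and> t < y"
    and taylor: "f y = (\<Sum>n<2. diff n x / fact n * (y - x) ^ n) + diff 2 t / fact 2 * (y - x)\<^sup>2"
    using Taylor[of 2 diff f l u x y] assms(4,5) False by (auto simp: diff_def)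
  have "t \<in> {l..u}" using t assms(4,5) by (auto split: if_splits)
  have "f y - f x - (y - x) * f' x = f'' t / 2 * (y - x)\<^sup>2"
    using taylor by (simp add: diff_def numeral_2_eq_2)
  also have "\<bar>\<dots>\<bar> \<le> B / 2 * (y - x)\<^sup>2"
    using bound[OF \<open>t \<in> {l..u}\<close>] by (simp add: abs_mult mult_right_mono)
  finally show ?thesis .
qed simp

text \<open>The weight \<open>W\<close> may be unbounded (as the Beta weight is at the endpoints), so
  \<open>leibniz_rule\<close> does not apply; a uniform quadratic remainder bound is enough instead.\<close>

lemma has_real_derivative_integral_quadratic_remainder:
  fixes W g' :: "real \<Rightarrow> real" and g :: "real \<Rightarrow> real \<Rightarrow> real"
  assumes W: "W integrable_on S" "\<And>s. s \<in> S \<Longrightarrow> 0 \<le> W s" and "0 < d"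
    and integrable: "\<And>y. \<bar>y - x\<bar> < d \<Longrightarrow> (\<lambda>s. W s * g y s) integrable_on S"
    and integrable': "(\<lambda>s. W s * g' s) integrable_on S"
    and remainder: "\<And>s y. s \<in> S \<Longrightarrow> \<bar>y - x\<bar> < d \<Longrightarrow>
      \<bar>g y s - g x s - (y - x) * g' s\<bar> \<le> C * (y - x)\<^sup>2"
  shows "((\<lambda>y. integral S (\<lambda>s. W s * g y s)) has_real_derivative integral S (\<lambda>s. W s * g' s)) (at x)"
proof -
  define F where "F y = integral S (\<lambda>s. W s * g y s)" for y
  define D where "D = integral S (\<lambda>s. W s * g' s)"
  have "((\<lambda>h. (F (x + h) - F x) / h - D) \<longlongrightarrow> 0) (at 0)"
  proof (rule Lim_null_comparison)
    have "\<forall>\<^sub>F h in at 0. h \<noteq> 0 \<and> \<bar>h\<bar> < d"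
      unfolding eventually_at using \<open>0 < d\<close> by (intro exI[of _ d]) (auto simp: dist_norm)
    then show "\<forall>\<^sub>F h in at 0. norm ((F (x + h) - F x) / h - D) \<le> C * \<bar>h\<bar> * integral S W"
    proof (rule eventually_mono)
      fix h :: real assume h: "h \<noteq> 0 \<and> \<bar>h\<bar> < d"
      define R where "R s = W s * g (x + h) s - W s * g x s - h * (W s * g' s)" for s
      have R: "(R has_integral F (x + h) - F x - h * D) S"
        unfolding R_def F_def D_def using h \<open>0 < d\<close>
        by (intro has_integral_diff has_integral_mult_right integrable_integral integrable integrable') auto
      have "\<bar>F (x + h) - F x - h * D\<bar> \<le> integral S (\<lambda>s. W s * (C * h\<^sup>2))"
      proof -
        have "norm (R s) \<le> W s * (C * h\<^sup>2)" if "s \<in> S" for s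
        proof -
          have "R s = W s * (g (x + h) s - g x s - h * g' s)" by (simp add: R_def algebra_simps)
          then show ?thesis
            using remainder[OF that, of "x + h"] W(2)[OF that] h by (simp add: abs_mult mult_left_mono)
        qed
        then show ?thesis
          using integral_norm_bound_integral[OF has_integral_integrable[OF R]
              integrable_on_mult_left[OF W(1)]] integral_unique[OF R] by simp
      qed
      then have "\<bar>F (x + h) - F x - h * D\<bar> \<le> C * h\<^sup>2 * integral S W"
        by (simp add: mult.commute)
      moreover have "(F (x + h) - F x) / h - D = (F (x + h) - F x - h * D) / h"
        using h by (simp add: field_simps)
      ultimately show "norm ((F (x + h) - F x) / h - D) \<le> C * \<bar>h\<bar> * integral S W"
        using h by (simp add: abs_divide divide_le_eq power2_eq_square mult_ac)
    qed
    show "((\<lambda>h. C * \<bar>h\<bar> * integral S W) \<longlongrightarrow> 0) (at 0)"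
      by (auto intro!: tendsto_eq_intros)
  qed
  then have "((\<lambda>h. (F (x + h) - F x) / h) \<longlongrightarrow> D) (at 0)"
    using Lim_null by blast
  then show ?thesis unfolding F_def D_def DERIV_def .
qed

lemma one_minus_mult_bounds:
  fixes s x :: real
  assumes "0 \<le> s" "s \<le> 1"
  shows "min 1 (1 - x) \<le> 1 - s * x" "1 - s * x \<le> 1 + \<bar>x\<bar>"
proof -
  show "min 1 (1 - x) \<le> 1 - s * x"
  proof (cases "x \<le> 0")
    case True
    then have "s * x \<le> 0" using assms by (simp add: mult_nonneg_nonpos)
    then show ?thesis by linarith
  next
    case False
    then have "s * x \<le> x" using assms by (simp add: mult_left_le_one_le)
    then show ?thesis by linarith
  qed
  have "\<bar>s * x\<bar> \<le> \<bar>x\<bar>" using assms by (simp add: abs_mult mult_left_le_one_le)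
  then show "1 - s * x \<le> 1 + \<bar>x\<bar>" by linarith
qed

lemma one_minus_mult_pos:
  fixes s x :: real
  assumes "x < 1" "0 \<le> s" "s \<le> 1"
  shows "0 < 1 - s * x"
  using one_minus_mult_bounds(1)[OF assms(2,3), of x] assms(1) by linarith

lemma one_minus_mult_powr_remainder_le:
  fixes x y s p :: real
  assumes "x < 1" "0 \<le> s" "s \<le> 1" "\<bar>y - x\<bar> < (1 - x) / 2"
  shows "\<bar>(1 - s * y) powr p - (1 - s * x) powr p - (y - x) * (- p * s * (1 - s * x) powr (p - 1))\<bar>
    \<le> \<bar>p * (p - 1)\<bar> * (min 1 ((1 - x) / 2) powr (p - 2) + (2 + 2 * \<bar>x\<bar>) powr (p - 2)) / 2 * (y - x)\<^sup>2"
proof -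
  define d where "d = (1 - x) / 2"
  have d: "0 < d" using assms(1) by (simp add: d_def)
  have y: "y \<in> {x - d..x + d}" using assms(4) unfolding abs_less_iff d_def by (auto simp: field_simps)
  have bounds: "min 1 d \<le> 1 - s * t" "1 - s * t \<le> 2 + 2 * \<bar>x\<bar>" if "t \<in> {x - d..x + d}" for t
  proof -
    from that have "x - d \<le> t" "t \<le> x + d" by auto
    then have "d \<le> 1 - t" "t \<le> \<bar>x\<bar> + d" "- t \<le> \<bar>x\<bar> + d" "d \<le> 1 + \<bar>x\<bar>"
      unfolding d_def by (simp_all add: abs_if field_simps)
    then show "min 1 d \<le> 1 - s * t" "1 - s * t \<le> 2 + 2 * \<bar>x\<bar>"
      using one_minus_mult_bounds[OF assms(2,3), of t] by auto
  qed
  show ?thesis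
    unfolding d_def[symmetric]
  proof (rule taylor_quadratic_remainder_le[where l = "x - d" and u = "x + d"])
    fix t assume t: "t \<in> {x - d..x + d}"
    have pos: "0 < 1 - s * t" using bounds(1)[OF t] d by linarith
    show "((\<lambda>t. (1 - s * t) powr p) has_real_derivative - p * s * (1 - s * t) powr (p - 1)) (at t)"
      using pos by (auto intro!: derivative_eq_intros)
    show "((\<lambda>t. - p * s * (1 - s * t) powr (p - 1)) has_real_derivative
        p * (p - 1) * s\<^sup>2 * (1 - s * t) powr (p - 2)) (at t)"
      using pos by (auto intro!: derivative_eq_intros simp: power2_eq_square)
    have "s\<^sup>2 * (1 - s * t) powr (p - 2) \<le> 1 * (min 1 d powr (p - 2) + (2 + 2 * \<bar>x\<bar>) powr (p - 2))"
      using assms(2,3) bounds[OF t] d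
      by (intro mult_mono powr_le_powr_add_powr) (auto simp: power_le_one)
    then show "\<bar>p * (p - 1) * s\<^sup>2 * (1 - s * t) powr (p - 2)\<bar>
        \<le> \<bar>p * (p - 1)\<bar> * (min 1 d powr (p - 2) + (2 + 2 * \<bar>x\<bar>) powr (p - 2))"
      by (simp add: abs_mult mult.assoc mult_left_mono)
  qed (use y d in auto)
qed

definition beta_weight :: "real \<Rightarrow> real \<Rightarrow> real \<Rightarrow> real" where
  "beta_weight b c s = s powr (b - 1) * (1 - s) powr (c - b - 1)"

definition euler_integral :: "real \<Rightarrow> real \<Rightarrow> nat \<Rightarrow> real \<Rightarrow> real \<Rightarrow> real" where
  "euler_integral b c k p x = integral {0..1} (\<lambda>s. beta_weight b c s * s ^ k * (1 - s * x) powr p)"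

lemma beta_weight_nonneg: "0 \<le> beta_weight b c s"
  by (simp add: beta_weight_def)

lemma beta_weight_mult_power:
  assumes "s \<in> {0..1}"
  shows "beta_weight b c s * s ^ k = s powr (b + real k - 1) * (1 - s) powr (c - b - 1)"
proof (cases "s = 0")
  case False
  with assms have "s powr (b + real k - 1) = s powr (b - 1) * s ^ k"
    by (simp add: powr_add [symmetric] powr_realpow [symmetric] algebra_simps)
  then show ?thesis by (simp add: beta_weight_def algebra_simps)
qed (simp add: beta_weight_def)

lemma beta_weight_power_has_integral:
  assumes "0 < b" "b < c"
  shows "((\<lambda>s. beta_weight b c s * s ^ k) has_integral Beta (b + real k) (c - b)) {0..1}"
proof -
  have "((\<lambda>s. s powr (b + real k - 1) * (1 - s) powr (c - b - 1)) has_integral Beta (b + real k) (c - b)) {0..1}"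
    using has_integral_Beta_real[of "b + real k" "c - b"] assms by simp
  then show ?thesis by (rule has_integral_eq[rotated]) (simp add: beta_weight_mult_power)
qed

lemma euler_integral_integrable:
  assumes "0 < b" "b < c" "x < 1"
  shows "(\<lambda>s. beta_weight b c s * s ^ k * (1 - s * x) powr p) integrable_on {0..1}"
proof -
  have "beta_weight b c absolutely_integrable_on {0..1}"
    using beta_weight_power_has_integral[OF assms(1,2), of 0] beta_weight_nonneg
    by (intro nonnegative_absolutely_integrable_1) auto
  moreover have "continuous_on {0..1} (\<lambda>s. s ^ k * (1 - s * x) powr p)"
    using one_minus_mult_pos[OF assms(3)] by (intro continuous_intros) force
  ultimately have "(\<lambda>s. (s ^ k * (1 - s * x) powr p) * beta_weight b c s) absolutely_integrable_on {0..1}"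
    by (intro absolutely_integrable_bounded_measurable_product_real
        continuous_imp_measurable_on_sets_lebesgue compact_imp_bounded compact_continuous_image) auto
  then show ?thesis
    by (simp add: absolutely_integrable_on_def mult_ac)
qed

lemma euler_integral_has_integral:
  assumes "0 < b" "b < c" "x < 1"
  shows "((\<lambda>s. beta_weight b c s * s ^ k * (1 - s * x) powr p) has_integral euler_integral b c k p x) {0..1}"
  unfolding euler_integral_def using euler_integral_integrable[OF assms] by (rule integrable_integral)

lemma euler_integral_nonneg:
  assumes "0 < b" "b < c" "x < 1"
  shows "0 \<le> euler_integral b c k p x"
  using euler_integral_has_integral[OF assms] by (rule has_integral_nonneg) (simp add: beta_weight_nonneg)

lemma euler_integral_pos:
  assumes "0 < b" "b < c" "x < 1" "0 \<le> p"
  shows "0 < euler_integral b c k p x"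
proof -
  define m where "m = min 1 (1 - x)"
  have "0 < m" using assms(3) by (simp add: m_def)
  have "m powr p * Beta (b + real k) (c - b) \<le> euler_integral b c k p x"
  proof (rule has_integral_le[OF has_integral_mult_right[OF beta_weight_power_has_integral[OF assms(1,2)]]
        euler_integral_has_integral[OF assms(1-3)]])
    fix s :: real assume "s \<in> {0..1}"
    then have "m powr p \<le> (1 - s * x) powr p"
      using one_minus_mult_bounds(1)[of s x] \<open>0 < m\<close> assms(4) by (intro powr_mono2) (auto simp: m_def)
    moreover have "0 \<le> beta_weight b c s * s ^ k"
      using \<open>s \<in> {0..1}\<close> by (simp add: beta_weight_nonneg)
    ultimately show "m powr p * (beta_weight b c s * s ^ k) \<le> beta_weight b c s * s ^ k * (1 - s * x) powr p"
      by (metis mult.commute mult_right_mono)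
  qed
  moreover have "0 < Beta (b + real k) (c - b)"
    using assms by (simp add: Beta_def Gamma_real_pos)
  ultimately show ?thesis using \<open>0 < m\<close> by (smt (verit) mult_pos_pos powr_gt_zero)
qed

lemma has_real_derivative_euler_integral:
  assumes "0 < b" "b < c" "x < 1"
  shows "(euler_integral b c k p has_real_derivative - p * euler_integral b c (k + 1) (p - 1) x) (at x)"
proof -
  define W where "W s = beta_weight b c s * s ^ k" for s
  define C where "C = \<bar>p * (p - 1)\<bar> * (min 1 ((1 - x) / 2) powr (p - 2) + (2 + 2 * \<bar>x\<bar>) powr (p - 2)) / 2"
  have "((\<lambda>y. integral {0..1} (\<lambda>s. W s * (1 - s * y) powr p)) has_real_derivative
      integral {0..1} (\<lambda>s. W s * (- p * s * (1 - s * x) powr (p - 1)))) (at x)"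
  proof (rule has_real_derivative_integral_quadratic_remainder[where d = "(1 - x) / 2" and C = C])
    show "\<bar>(1 - s * y) powr p - (1 - s * x) powr p - (y - x) * (- p * s * (1 - s * x) powr (p - 1))\<bar>
        \<le> C * (y - x)\<^sup>2" if "s \<in> {0..1}" "\<bar>y - x\<bar> < (1 - x) / 2" for s y
      using one_minus_mult_powr_remainder_le[OF assms(3)] that unfolding C_def by auto
    show "W integrable_on {0..1}"
      unfolding W_def by (rule has_integral_integrable[OF beta_weight_power_has_integral[OF assms(1,2)]])
    show "(\<lambda>s. W s * (- p * s * (1 - s * x) powr (p - 1))) integrable_on {0..1}"
      using integrable_on_mult_right[OF euler_integral_integrable[OF assms, of "k + 1" "p - 1"], of "- p"]
      by (simp add: W_def mult_ac)
    fix y assume "\<bar>y - x\<bar> < (1 - x) / 2"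
    then have "y < 1" unfolding abs_less_iff by (simp add: field_simps)
    then show "(\<lambda>s. W s * (1 - s * y) powr p) integrable_on {0..1}"
      unfolding W_def by (rule euler_integral_integrable[OF assms(1,2)])
  qed (use assms beta_weight_nonneg in \<open>auto simp: W_def\<close>)
  moreover have "integral {0..1} (\<lambda>s. W s * (- p * s * (1 - s * x) powr (p - 1)))
      = - p * euler_integral b c (k + 1) (p - 1) x"
    unfolding euler_integral_def W_def by (simp flip: integral_mult_right add: mult_ac)
  ultimately show ?thesis
    by (simp add: W_def euler_integral_def [abs_def] mult.assoc)
qed

lemma hyp2F1_eq_euler_integral:
  assumes "0 < b" "b < c"
  shows "hyp2F1 a (b + real k) (c + real k) x
    = Gamma (c + real k) / (Gamma (b + real k) * Gamma (c - b)) * euler_integral b c k (- a) x"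
proof -
  have "integral {0..1} (\<lambda>s. s powr (b + real k - 1) * (1 - s) powr (c + real k - (b + real k) - 1) / (1 - s * x) powr a)
      = euler_integral b c k (- a) x"
    unfolding euler_integral_def
    by (rule integral_cong) (simp add: beta_weight_mult_power powr_minus_divide)
  then show ?thesis by (simp add: hyp2F1_def)
qed

lemma chebyshev_integral_le:
  fixes \<nu> g :: "real \<Rightarrow> real"
  assumes nonneg: "\<And>s. s \<in> {a..b} \<Longrightarrow> 0 \<le> \<nu> s" and mono: "mono_on {a..b} g"
    and I0: "(\<nu> has_integral I0) {a..b}" and "0 < I0"
    and I1: "((\<lambda>s. \<nu> s * s) has_integral I1) {a..b}"
    and Ig: "((\<lambda>s. \<nu> s * g s) has_integral Ig) {a..b}"
    and I1g: "((\<lambda>s. \<nu> s * s * g s) has_integral I1g) {a..b}"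
  shows "I1 * Ig \<le> I0 * I1g"
proof -
  \<comment> \<open>\<open>t\<close> is the \<open>\<nu>\<close>-mean of \<open>s\<close>; integrating \<open>\<nu> s (s - t) (g s - g t) \<ge> 0\<close> gives the claim.\<close>
  define t where "t = I1 / I0"
  have "a * I0 \<le> I1"
    by (rule has_integral_le[OF has_integral_mult_right[OF I0] I1])
      (metis atLeastAtMost_iff mult.commute mult_right_mono nonneg)
  moreover have "I1 \<le> b * I0"
    by (rule has_integral_le[OF I1 has_integral_mult_right[OF I0]])
      (metis atLeastAtMost_iff mult.commute mult_right_mono nonneg)
  ultimately have t: "t \<in> {a..b}" using \<open>0 < I0\<close> by (simp add: t_def field_simps)
  have "((\<lambda>s. \<nu> s * s * g s - t * (\<nu> s * g s) - g t * (\<nu> s * s) + t * g t * \<nu> s)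
      has_integral I1g - t * Ig - g t * I1 + t * g t * I0) {a..b}"
    by (intro has_integral_add has_integral_diff has_integral_mult_right I0 I1 Ig I1g)
  then have "((\<lambda>s. \<nu> s * ((s - t) * (g s - g t))) has_integral I1g - t * Ig - g t * I1 + t * g t * I0) {a..b}"
    by (rule has_integral_eq[rotated]) (simp add: algebra_simps)
  moreover have "0 \<le> \<nu> s * ((s - t) * (g s - g t))" if "s \<in> {a..b}" for s
  proof -
    have "0 \<le> (s - t) * (g s - g t)"
      using mono_onD[OF mono that t] mono_onD[OF mono t that]
      by (cases "s \<le> t") (auto intro: mult_nonpos_nonpos)
    then show ?thesis using nonneg[OF that] by simp
  qed
  ultimately have "0 \<le> I1g - t * Ig - g t * I1 + t * g t * I0"
    by (rule has_integral_nonneg)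
  moreover have "t * I0 = I1" using \<open>0 < I0\<close> by (simp add: t_def)
  then have "t * g t * I0 = g t * I1" by (simp add: mult_ac)
  ultimately have "t * Ig \<le> I1g" by linarith
  then have "I0 * (t * Ig) \<le> I0 * I1g" using \<open>0 < I0\<close> by simp
  moreover have "I0 * (t * Ig) = I1 * Ig" using \<open>t * I0 = I1\<close> by (simp add: mult_ac)
  ultimately show ?thesis by simp
qed

lemma mono_on_power_div_one_minus_mult:
  fixes x :: real
  assumes "x < 1"
  shows "mono_on {0..1} (\<lambda>s. (s / (1 - s * x)) ^ j)"
proof (rule mono_onI)
  fix s t :: real assume "s \<in> {0..1}" "t \<in> {0..1}" "s \<le> t"
  then have "0 < 1 - s * x" "0 < 1 - t * x" using one_minus_mult_pos[OF assms] by auto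
  moreover have "s * (1 - t * x) \<le> t * (1 - s * x)" using \<open>s \<le> t\<close> by (simp add: algebra_simps)
  ultimately have "s / (1 - s * x) \<le> t / (1 - t * x)" by (simp add: divide_simps)
  then show "(s / (1 - s * x)) ^ j \<le> (t / (1 - t * x)) ^ j"
    using \<open>s \<in> {0..1}\<close> \<open>0 < 1 - s * x\<close> by (intro power_mono) auto
qed

lemma euler_integral_chebyshev:
  assumes "0 < b" "b < c" "x < 1" "0 \<le> p"
  shows "euler_integral b c 1 p x * euler_integral b c j (p - real j) x
    \<le> euler_integral b c 0 p x * euler_integral b c (j + 1) (p - real j) x"
proof (rule chebyshev_integral_le[where \<nu> = "\<lambda>s. beta_weight b c s * (1 - s * x) powr p"
      and g = "\<lambda>s. (s / (1 - s * x)) ^ j"])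
  have shift: "(1 - s * x) powr p * (s / (1 - s * x)) ^ j = s ^ j * (1 - s * x) powr (p - real j)"
    if "s \<in> {0..1}" for s
    using one_minus_mult_pos[OF assms(3)] that
    by (simp add: powr_diff powr_realpow power_divide)
  show "((\<lambda>s. beta_weight b c s * (1 - s * x) powr p * (s / (1 - s * x)) ^ j)
      has_integral euler_integral b c j (p - real j) x) {0..1}"
    by (rule has_integral_eq[OF _ euler_integral_has_integral[OF assms(1-3)]]) (simp add: shift mult.assoc)
  show "((\<lambda>s. beta_weight b c s * (1 - s * x) powr p * s * (s / (1 - s * x)) ^ j)
      has_integral euler_integral b c (j + 1) (p - real j) x) {0..1}"
    by (rule has_integral_eq[OF _ euler_integral_has_integral[OF assms(1-3)]]) (simp add: shift mult_ac)
  show "((\<lambda>s. beta_weight b c s * (1 - s * x) powr p) has_integral euler_integral b c 0 p x) {0..1}"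
    using euler_integral_has_integral[OF assms(1-3), of 0] by simp
  show "((\<lambda>s. beta_weight b c s * (1 - s * x) powr p * s) has_integral euler_integral b c 1 p x) {0..1}"
    by (rule has_integral_eq[OF _ euler_integral_has_integral[OF assms(1-3)]]) (simp add: mult_ac)
qed (use assms beta_weight_nonneg euler_integral_pos mono_on_power_div_one_minus_mult in auto)

lemma has_real_derivative_euler_integral_quotient:
  assumes "0 < b" "b < c" "x < 1" "0 \<le> p"
  shows "((\<lambda>y. euler_integral b c (k + 1) (p - 1) y / euler_integral b c k p y) has_real_derivative
      (1 - p) * (euler_integral b c (k + 2) (p - 2) x / euler_integral b c k p x)
      + p * (euler_integral b c (k + 1) (p - 1) x / euler_integral b c k p x)\<^sup>2) (at x)"
proof -
  have "(euler_integral b c (k + 1) (p - 1) has_real_derivative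
      - (p - 1) * euler_integral b c (k + 2) (p - 2) x) (at x)"
    using has_real_derivative_euler_integral[OF assms(1-3), of "k + 1" "p - 1"] by (simp add: diff_diff_eq)
  from DERIV_divide[OF this has_real_derivative_euler_integral[OF assms(1-3), of k p]]
  have "((\<lambda>y. euler_integral b c (k + 1) (p - 1) y / euler_integral b c k p y) has_real_derivative
      (- (p - 1) * euler_integral b c (k + 2) (p - 2) x * euler_integral b c k p x
        - euler_integral b c (k + 1) (p - 1) x * (- p * euler_integral b c (k + 1) (p - 1) x))
      / (euler_integral b c k p x * euler_integral b c k p x)) (at x)"
    using euler_integral_pos[OF assms, of k] by simp
  moreover have "(- (p - 1) * C * A - B * (- p * B)) / (A * A) = (1 - p) * (C / A) + p * (B / A)\<^sup>2"
    if "A \<noteq> 0" for A B C :: real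
    using that by (simp add: field_simps power2_eq_square)
  ultimately show ?thesis
    using euler_integral_pos[OF assms, of k] by simp
qed

lemma log_convex_on_euler_integral_quotient:
  assumes "0 < b" "b < c" "0 \<le> p" "p \<le> 1"
  shows "log_convex_on {..<1} (\<lambda>x. euler_integral b c 0 p x / euler_integral b c 1 p x)"
  unfolding log_convex_on_def
proof
  define u where "u k x = euler_integral b c (k + 1) (p - 1) x / euler_integral b c k p x" for k x
  define v where "v k x = euler_integral b c (k + 2) (p - 2) x / euler_integral b c k p x" for k x
  have pos: "0 < euler_integral b c k p x" if "x < 1" for k x
    using euler_integral_pos assms that by blast
  then show "\<forall>x\<in>{..<1}. 0 < euler_integral b c 0 p x / euler_integral b c 1 p x"
    by simp
  show "convex_on {..<1} (\<lambda>x. ln (euler_integral b c 0 p x / euler_integral b c 1 p x))"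
  proof (rule f''_ge0_imp_convex[where f' = "\<lambda>x. p * (u 1 x - u 0 x)"
        and f'' = "\<lambda>x. p * ((1 - p) * (v 1 x - v 0 x) + p * ((u 1 x)\<^sup>2 - (u 0 x)\<^sup>2))"])
    fix x :: real assume "x \<in> {..<1}"
    then have "x < 1" by simp
    define J0 J1 where "J0 = euler_integral b c 0 p x" and "J1 = euler_integral b c 1 p x"
    have "0 < J0" "0 < J1" using pos[OF \<open>x < 1\<close>] by (simp_all add: J0_def J1_def)
    have quotient: "((\<lambda>y. euler_integral b c 0 p y / euler_integral b c 1 p y) has_real_derivative
        (- p * euler_integral b c 1 (p - 1) x * J1 - J0 * (- p * euler_integral b c 2 (p - 1) x)) / (J1 * J1)) (at x)"
      using DERIV_divide[OF has_real_derivative_euler_integral[OF assms(1,2) \<open>x < 1\<close>, of 0 p]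
          has_real_derivative_euler_integral[OF assms(1,2) \<open>x < 1\<close>, of 1 p]] \<open>0 < J1\<close>
      by (simp add: J0_def J1_def numeral_2_eq_2)
    have "0 < J0 / J1" using \<open>0 < J0\<close> \<open>0 < J1\<close> by simp
    from DERIV_chain2[OF DERIV_ln_divide[OF this [unfolded J0_def J1_def]] quotient]
    show "((\<lambda>x. ln (euler_integral b c 0 p x / euler_integral b c 1 p x)) has_real_derivative
        p * (u 1 x - u 0 x)) (at x)"
      by (rule DERIV_cong) (use \<open>0 < J0\<close> \<open>0 < J1\<close> in \<open>simp add: u_def J0_def J1_def numeral_2_eq_2 field_simps\<close>)
    have du: "(u k has_real_derivative (1 - p) * v k x + p * (u k x)\<^sup>2) (at x)" for k
      unfolding u_def v_def
      by (rule has_real_derivative_euler_integral_quotient[OF assms(1,2) \<open>x < 1\<close> assms(3)])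
    show "((\<lambda>x. p * (u 1 x - u 0 x)) has_real_derivative
        p * ((1 - p) * (v 1 x - v 0 x) + p * ((u 1 x)\<^sup>2 - (u 0 x)\<^sup>2))) (at x)"
      using DERIV_cmult[OF DERIV_diff[OF du[of 1] du[of 0]], of p] by (simp add: algebra_simps)
    have "u 0 x \<le> u 1 x" "v 0 x \<le> v 1 x"
      using euler_integral_chebyshev[OF assms(1,2) \<open>x < 1\<close> assms(3), of 1]
        euler_integral_chebyshev[OF assms(1,2) \<open>x < 1\<close> assms(3), of 2]
        pos[OF \<open>x < 1\<close>, of 0] pos[OF \<open>x < 1\<close>, of 1]
      by (simp_all add: u_def v_def divide_simps mult.commute numeral_2_eq_2 numeral_3_eq_3)
    moreover have "0 \<le> u 0 x"
      using euler_integral_nonneg[OF assms(1,2) \<open>x < 1\<close>] pos[OF \<open>x < 1\<close>] by (simp add: u_def)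
    ultimately show "0 \<le> p * ((1 - p) * (v 1 x - v 0 x) + p * ((u 1 x)\<^sup>2 - (u 0 x)\<^sup>2))"
      using assms(3,4) by (simp add: power_mono)
  qed simp
qed

lemma log_convex_on_cmult:
  assumes "log_convex_on S f" "0 < K"
  shows "log_convex_on S (\<lambda>x. K * f x)"
proof -
  have "convex S" using assms(1) by (simp add: log_convex_on_def convex_on_def)
  then have "convex_on S (\<lambda>x. ln K + ln (f x))"
    using assms(1) by (intro convex_on_add) (auto simp: log_convex_on_def convex_on_const)
  moreover have "ln K + ln (f x) = ln (K * f x)" if "x \<in> S" for x
    using assms that by (simp add: log_convex_on_def ln_mult_pos)
  ultimately show ?thesis
    using assms by (auto simp: log_convex_on_def intro: convex_on_cong)
qed

lemma hyp2F1_quotient_eq_euler_integral_quotient: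
  assumes "0 < b" "b < c"
  shows "hyp2F1 a b c x / hyp2F1 a (b + 1) (c + 1) x
    = b / c * (euler_integral b c 0 (- a) x / euler_integral b c 1 (- a) x)"
proof -
  have "Gamma b \<noteq> 0" "Gamma c \<noteq> 0" "Gamma (c - b) \<noteq> 0"
    using assms by (auto simp: Gamma_eq_zero_iff dest: nonpos_Ints_nonpos)
  moreover have "Gamma (b + 1) = b * Gamma b" "Gamma (c + 1) = c * Gamma c"
    using assms by (auto intro!: Gamma_plus1 dest: nonpos_Ints_nonpos)
  ultimately have "Gamma c / (Gamma b * Gamma (c - b)) / (Gamma (c + 1) / (Gamma (b + 1) * Gamma (c - b))) = b / c"
    using assms by (simp add: field_simps)
  moreover have "hyp2F1 a b c x = Gamma c / (Gamma b * Gamma (c - b)) * euler_integral b c 0 (- a) x"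
    "hyp2F1 a (b + 1) (c + 1) x = Gamma (c + 1) / (Gamma (b + 1) * Gamma (c - b)) * euler_integral b c 1 (- a) x"
    using hyp2F1_eq_euler_integral[OF assms, of a 0 x] hyp2F1_eq_euler_integral[OF assms, of a 1 x]
    by simp_all
  ultimately show ?thesis
    by (simp only: times_divide_times_eq [symmetric])
qed

theorem theorem7p1:
  fixes a b c :: real
  assumes "-1 < a" "a < 0" "0 < b" "b < c"
  shows "log_convex_on {..<1} (\<lambda>x. hyp2F1 a b c x / hyp2F1 a (b + 1) (c + 1) x)"
proof -
  have "log_convex_on {..<1} (\<lambda>x. b / c * (euler_integral b c 0 (- a) x / euler_integral b c 1 (- a) x))"
    using assms by (intro log_convex_on_cmult log_convex_on_euler_integral_quotient) auto
  then show ?thesis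
    by (simp only: hyp2F1_quotient_eq_euler_integral_quotient[OF assms(3,4)])
qed

end
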